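(* Let $k\geq 2$ be an integer and $G$ a graph. Suppose $f=u_1\dots u_{k-1}$ is a copy of $K_{k-1}$ in $G$ which is a copy of $K_{k-1}$ of two distinct $K_{k+1}$-components $C_1$ and $C_2$ of $G$. Let $uv$ and $wu_k$ be edges of $G$ such that the $k$-cliques $fu$ and $fv$ belong to $C_1$ and the $k$-cliques $fw$ and $fu_k$ belong to $C_2$. Then for each $i\in[k-1]$, the common neighbourhood $\Gamma(u_1,\dots,u_{i-1},u_{i+1},\dots,u_k,w,u,v)$ is an independent set.
   Context: A $K_{k+1}$-walk in $G$ is a sequence of copies of $K_k$ in which consecutive copies lie in a common copy of $K_{k+1}$; the endpoints are then $K_{k+1}$-connected, and the equivalence classes of copies of $K_k$ are the $K_{k+1}$-components. A copy of $K_{k-1}$ is a copy of $K_{k-1}$ of a component $C$ if it extends to a copy of $K_k$ in $C$. For a clique $f$ and vertex $x$ adjacent to all of $f$, $fx$ denotes the clique $f\cup\{x\}$. $\Gamma(x_1,\dots,x_s)$ denotes the set of common neighbours of $x_1,\dots,x_s$ in $G$. *)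

theory Defs
  imports Main
begin

definition graph :: "'a set \<Rightarrow> ('a \<Rightarrow> 'a \<Rightarrow> bool) \<Rightarrow> bool" where
  "graph V E \<longleftrightarrow> finite V \<and> (\<forall>x y. E x y \<longrightarrow> x \<in> V \<and> y \<in> V \<and> x \<noteq> y \<and> E y x)"

definition kclique :: "'a set \<Rightarrow> ('a \<Rightarrow> 'a \<Rightarrow> bool) \<Rightarrow> nat \<Rightarrow> 'a set \<Rightarrow> bool" where
  "kclique V E k S \<longleftrightarrow> S \<subseteq> V \<and> finite S \<and> card S = k \<and>
     (\<forall>x\<in>S. \<forall>y\<in>S. x \<noteq> y \<longrightarrow> E x y)"

definition walk_step :: "'a set \<Rightarrow> ('a \<Rightarrow> 'a \<Rightarrow> bool) \<Rightarrow> nat \<Rightarrow> 'a set \<Rightarrow> 'a set \<Rightarrow> bool" where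
  "walk_step V E k A B \<longleftrightarrow> kclique V E k A \<and> kclique V E k B \<and>
     (\<exists>Q. kclique V E (k + 1) Q \<and> A \<subseteq> Q \<and> B \<subseteq> Q)"

definition kconnected :: "'a set \<Rightarrow> ('a \<Rightarrow> 'a \<Rightarrow> bool) \<Rightarrow> nat \<Rightarrow> 'a set \<Rightarrow> 'a set \<Rightarrow> bool" where
  "kconnected V E k A B \<longleftrightarrow> kclique V E k A \<and> kclique V E k B \<and>
     (walk_step V E k)\<^sup>*\<^sup>* A B"

definition kcomponent :: "'a set \<Rightarrow> ('a \<Rightarrow> 'a \<Rightarrow> bool) \<Rightarrow> nat \<Rightarrow> 'a set set \<Rightarrow> bool" where
  "kcomponent V E k C \<longleftrightarrow> (\<exists>A. kclique V E k A \<and> C = {B. kconnected V E k A B})"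

text \<open>f is a copy of K_{k-1} of component C (C a K_{k+1}-component consisting of copies of K_k).\<close>
definition clique_of_component ::
  "'a set \<Rightarrow> ('a \<Rightarrow> 'a \<Rightarrow> bool) \<Rightarrow> nat \<Rightarrow> 'a set set \<Rightarrow> 'a set \<Rightarrow> bool" where
  "clique_of_component V E k C f \<longleftrightarrow> kclique V E (k - 1) f \<and> (\<exists>S\<in>C. f \<subseteq> S)"

definition common_nbhd :: "'a set \<Rightarrow> ('a \<Rightarrow> 'a \<Rightarrow> bool) \<Rightarrow> 'a set \<Rightarrow> 'a set" where
  "common_nbhd V E S = {x\<in>V. \<forall>y\<in>S. E x y}"

definition independent :: "('a \<Rightarrow> 'a \<Rightarrow> bool) \<Rightarrow> 'a set \<Rightarrow> bool" where
  "independent E T \<longleftrightarrow> (\<forall>x\<in>T. \<forall>y\<in>T. \<not> E x y)"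

end

theory Submission
  imports Defs
begin

text \<open>Suppose two vertices x, y of the common neighbourhood were adjacent. Write
  a = u_i, T = f - {a} and z = u_k. In the sequence of copies of K_k
  T+{a,u}, T+{u,v}, T+{u,x}, T+{x,y}, T+{x,z}, T+{z,w}, T+{w,a}
  consecutive members differ in one vertex and together span a copy of K_{k+1}, so
  it is a K_{k+1}-walk from fu \<in> C_1 to fw \<in> C_2, contradicting C_1 \<noteq> C_2.\<close>

lemma graph_sym: "graph V E \<Longrightarrow> E x y \<Longrightarrow> E y x"
  unfolding graph_def by blast

lemma graph_irrefl: "graph V E \<Longrightarrow> \<not> E x x"
  unfolding graph_def by blast

lemma common_nbhd_insert:
  "x \<in> common_nbhd V E (insert y S) \<longleftrightarrow> E x y \<and> x \<in> common_nbhd V E S"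
  unfolding common_nbhd_def by auto

lemma common_nbhd_Un:
  "x \<in> common_nbhd V E (S \<union> R) \<longleftrightarrow> x \<in> common_nbhd V E S \<and> x \<in> common_nbhd V E R"
  unfolding common_nbhd_def by auto

lemma kclique_insert:
  assumes "graph V E" "kclique V E n S" "p \<in> common_nbhd V E S"
  shows "kclique V E (Suc n) (insert p S)"
proof -
  have p: "p \<in> V" "\<forall>s\<in>S. E p s \<and> E s p"
    using assms(3) graph_sym[OF assms(1)] unfolding common_nbhd_def by auto
  then have "p \<notin> S"
    using graph_irrefl[OF assms(1)] by blast
  with p assms(2) show ?thesis
    unfolding kclique_def by simp
qed

lemma kclique_remove:
  assumes "kclique V E (Suc n) S" "a \<in> S"
  shows "kclique V E n (S - {a})"
  using assms unfolding kclique_def by auto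

lemma kclique_insert_common_nbhd:
  assumes "kclique V E (Suc n) (insert p S)" "kclique V E n S"
  shows "p \<in> common_nbhd V E S"
proof -
  have "p \<notin> S"
  proof
    assume "p \<in> S"
    then have "insert p S = S" by blast
    then show False using assms unfolding kclique_def by simp
  qed
  then show ?thesis using assms(1) unfolding kclique_def common_nbhd_def by auto
qed

lemma walk_step_exchange:
  assumes "graph V E" "kclique V E n S"
    and "p \<in> common_nbhd V E S" "q \<in> common_nbhd V E S" "E p q"
  shows "walk_step V E (Suc n) (insert p S) (insert q S)"
proof -
  have "q \<in> common_nbhd V E (insert p S)"
    using assms(4,5) graph_sym[OF assms(1)] by (simp add: common_nbhd_insert)
  then have "kclique V E (Suc (Suc n)) (insert q (insert p S))"
    using assms(1-3) by (intro kclique_insert)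
  then show ?thesis
    unfolding walk_step_def using assms by (auto intro: kclique_insert)
qed

lemma kcomponent_kclique: "kcomponent V E k C \<Longrightarrow> B \<in> C \<Longrightarrow> kclique V E k B"
  unfolding kcomponent_def kconnected_def by auto

lemma kcomponent_extension_common_nbhd:
  assumes "kcomponent V E (Suc n) C" "insert p F \<in> C" "kclique V E n F"
  shows "p \<in> common_nbhd V E F"
  using kcomponent_kclique[OF assms(1,2)] assms(3) by (rule kclique_insert_common_nbhd)

lemma symp_walk_step: "symp (walk_step V E k)"
  unfolding symp_def walk_step_def by blast

lemma kcomponent_eq_class:
  assumes "kcomponent V E k C" "A \<in> C"
  shows "C = {B. kconnected V E k A B}"
proof -
  let ?R = "(walk_step V E k)\<^sup>*\<^sup>*"
  obtain A0 where A0: "kclique V E k A0" "C = {B. kconnected V E k A0 B}"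
    using assms(1) unfolding kcomponent_def by blast
  then have "?R A0 A" "kclique V E k A"
    using assms(2) unfolding kconnected_def by auto
  moreover have "?R A A0"
    using \<open>?R A0 A\<close> by (rule sympD[OF symp_rtranclp[OF symp_walk_step]])
  ultimately have "?R A0 B \<longleftrightarrow> ?R A B" for B
    using rtranclp_trans by metis
  then show ?thesis
    using A0 \<open>kclique V E k A\<close> unfolding kconnected_def by auto
qed

lemma kcomponent_eqI:
  assumes "kcomponent V E k C1" "kcomponent V E k C2" "A \<in> C1" "B \<in> C2"
    and "(walk_step V E k)\<^sup>*\<^sup>* A B"
  shows "C1 = C2"
proof -
  have "B \<in> C1"
    using kcomponent_eq_class[OF assms(1,3)] assms(1-5) kcomponent_kclique
    unfolding kconnected_def by blast
  then show ?thesis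
    using kcomponent_eq_class[OF assms(1)] kcomponent_eq_class[OF assms(2,4)] by simp
qed

lemma walk_through_adjacent_common_neighbours:
  assumes G: "graph V E" and F: "kclique V E (Suc n) F" and "a \<in> F"
    and "u \<in> common_nbhd V E F" "v \<in> common_nbhd V E F" "E u v"
    and "w \<in> common_nbhd V E F" "z \<in> common_nbhd V E F" "E w z"
    and "x \<in> common_nbhd V E (insert z (F - {a}) \<union> {w, u, v})"
    and "y \<in> common_nbhd V E (insert z (F - {a}) \<union> {w, u, v})" "E x y"
  shows "(walk_step V E (Suc (Suc n)))\<^sup>*\<^sup>* (insert u F) (insert w F)"
proof -
  define T where "T = F - {a}"
  have F_eq: "F = insert a T"
    using \<open>a \<in> F\<close> unfolding T_def by blast
  have T: "kclique V E n T"
    unfolding T_def using F \<open>a \<in> F\<close> by (rule kclique_remove)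
  have a: "a \<in> common_nbhd V E T"
    using F T unfolding F_eq by (rule kclique_insert_common_nbhd)
  have nbhd: "u \<in> common_nbhd V E T" "v \<in> common_nbhd V E T" "w \<in> common_nbhd V E T"
    "z \<in> common_nbhd V E T" "x \<in> common_nbhd V E T" "y \<in> common_nbhd V E T"
    and edges: "E a u" "E a v" "E a w" "E a z" "E u v" "E w z" "E x y"
    "E x u" "E x v" "E x w" "E x z" "E y u" "E y z"
    using assms(4-12)[folded T_def, unfolded F_eq] graph_sym[OF G]
    by (simp_all add: common_nbhd_insert common_nbhd_Un)
  have step: "walk_step V E (Suc (Suc n)) (insert p (insert b T)) (insert q (insert b T))"
    if "b \<in> common_nbhd V E T" "p \<in> common_nbhd V E T" "q \<in> common_nbhd V E T"
      "E p b" "E q b" "E p q" for b p q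
    using G kclique_insert[OF G T that(1)] that(2-6)
    by (intro walk_step_exchange) (simp_all add: common_nbhd_insert)
  note sym = graph_sym[OF G]
  have "(walk_step V E (Suc (Suc n)))\<^sup>*\<^sup>* (insert a (insert u T)) (insert a (insert u T))"
    by simp
  also have "walk_step V E (Suc (Suc n)) \<dots> (insert v (insert u T))"
    using a nbhd edges sym by (intro step) auto
  also have "walk_step V E (Suc (Suc n)) \<dots> (insert x (insert u T))"
    using nbhd edges sym by (intro step) auto
  also have "\<dots> = insert u (insert x T)"
    by (rule insert_commute)
  also have "walk_step V E (Suc (Suc n)) \<dots> (insert y (insert x T))"
    using nbhd edges sym by (intro step) auto
  also have "walk_step V E (Suc (Suc n)) \<dots> (insert z (insert x T))"
    using nbhd edges sym by (intro step) auto
  also have "\<dots> = insert x (insert z T)"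
    by (rule insert_commute)
  also have "walk_step V E (Suc (Suc n)) \<dots> (insert w (insert z T))"
    using nbhd edges sym by (intro step) auto
  also have "\<dots> = insert z (insert w T)"
    by (rule insert_commute)
  also have "walk_step V E (Suc (Suc n)) \<dots> (insert a (insert w T))"
    using a nbhd edges sym by (intro step) auto
  finally show ?thesis
    unfolding F_eq by (simp add: insert_commute)
qed

theorem lemma5p2:
  fixes V :: "'a set" and E :: "'a \<Rightarrow> 'a \<Rightarrow> bool" and k :: nat
    and us :: "nat \<Rightarrow> 'a" and u v w :: 'a and C1 C2 :: "'a set set"
  assumes "graph V E"
    and "k \<ge> 2"
    and "kclique V E (k - 1) (us ` {1..k-1})"
    and "inj_on us {1..k-1}"
    and "kcomponent V E k C1" and "kcomponent V E k C2" and "C1 \<noteq> C2"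
    and "clique_of_component V E k C1 (us ` {1..k-1})"
    and "clique_of_component V E k C2 (us ` {1..k-1})"
    and "E u v" and "E w (us k)"
    and "insert u (us ` {1..k-1}) \<in> C1" and "insert v (us ` {1..k-1}) \<in> C1"
    and "insert w (us ` {1..k-1}) \<in> C2" and "insert (us k) (us ` {1..k-1}) \<in> C2"
  shows "\<forall>i\<in>{1..k-1}.
           independent E (common_nbhd V E (us ` ({1..k} - {i}) \<union> {w, u, v}))"
proof (intro ballI)
  fix i assume i: "i \<in> {1..k-1}"
  define F where "F = us ` {1..k-1}"
  define n where "n = k - 2"
  have k: "k = Suc (Suc n)"
    using assms(2) unfolding n_def by simp
  have F: "kclique V E (Suc n) F"
    using assms(3) unfolding F_def k by simp
  have "{1..k} - {i} = insert k ({1..k-1} - {i})"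
    using i assms(2) by auto
  then have nbhd_set: "us ` ({1..k} - {i}) = insert (us k) (F - {us i})"
    using i assms(4) unfolding F_def by (simp add: inj_on_image_set_diff)
  have in_C: "insert u F \<in> C1" "insert v F \<in> C1" "insert w F \<in> C2" "insert (us k) F \<in> C2"
    using assms(12-15) unfolding F_def .
  have nbhd: "u \<in> common_nbhd V E F" "v \<in> common_nbhd V E F"
    "w \<in> common_nbhd V E F" "us k \<in> common_nbhd V E F"
    using assms(5,6)[unfolded k] in_C F by (blast intro: kcomponent_extension_common_nbhd)+
  have "us i \<in> F"
    using i unfolding F_def by blast
  show "independent E (common_nbhd V E (us ` ({1..k} - {i}) \<union> {w, u, v}))"
    unfolding independent_def nbhd_set
  proof (intro ballI notI)
    fix x y
    assume "x \<in> common_nbhd V E (insert (us k) (F - {us i}) \<union> {w, u, v})"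
      and "y \<in> common_nbhd V E (insert (us k) (F - {us i}) \<union> {w, u, v})" and "E x y"
    with assms(1,10,11) F \<open>us i \<in> F\<close> nbhd
    have "(walk_step V E k)\<^sup>*\<^sup>* (insert u F) (insert w F)"
      unfolding k by (intro walk_through_adjacent_common_neighbours)
    then have "C1 = C2"
      using assms(5,6) in_C(1,3) by (intro kcomponent_eqI)
    with assms(7) show False ..
  qed
qed

end
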